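(* Let $\mathcal A$ be an abelian category and let $0\to F\xrightarrow{i} M\xrightarrow{d} C\to 0$ be a fully invariant short exact sequence in $\mathcal A$. (1) $M$ is strongly self-$F$-split if and only if $M$ is self-$F$-split and every direct summand of $M$ which contains $F$ is fully invariant. (2) $M$ is dual strongly self-$F$-split if and only if $M$ is dual self-$F$-split and every direct summand of $M$ which is contained in $F$ is fully invariant.
   Context: Let $\mathcal A$ be an abelian category. A morphism $s:X\to Y$ is a section if $ts=1_X$ for some $t:Y\to X$, and a retraction if $st=1_Y$ for some $t$. A monomorphism $i:K\to M$ is fully invariant if for every morphism $h:M\to M$ there is $\alpha:K\to K$ with $hi=i\alpha$; an epimorphism $d:M\to C$ is fully coinvariant if for every $h:M\to M$ there is $\beta:C\to C$ with $dh=\beta d$. A subobject is fully invariant if its inclusion monomorphism is. A short exact sequence $0\to F\xrightarrow{i}N\xrightarrow{d}C\to 0$ is fully invariant if $i$ is fully invariant (equivalently $d$ is fully coinvariant). A (fully invariant) direct summand is a subobject whose inclusion is a (fully invariant) section. For an object $M$ and a fully invariant short exact sequence $0\to F\xrightarrow{i}N\xrightarrow{d}C\to 0$: $N$ is $M$-$F$-split (resp. strongly $M$-$F$-split) if for every morphism $g:M\to N$ the kernel $\ker(dg)$ (equivalently, the morphism $j:P\to M$ in the pullback of $i$ along $g$) is a section (resp. a fully invariant section); $N$ is dual $M$-$F$-split (resp. dual strongly $M$-$F$-split) if for every morphism $g:N\to M$ the cokernel $\mathrm{coker}(gi)$ (equivalently, the morphism $p:M\to Q$ in the pushout of $d$ along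 $g$) is a retraction (resp. a fully coinvariant retraction). $N$ is (dual) (strongly) self-$F$-split if it is (dual) (strongly) $N$-$F$-split. *)

theory Defs
  imports Main
begin

text \<open>A category with a preadditive structure given as data: objects, morphisms,
  domain, codomain, identities, composition (Cmp g f = g after f),
  and on each hom-set an abelian group structure (Add, Neg, Zer a b).\<close>

record ('o, 'm) acat =
  Obj :: "'o set"
  Mor :: "'m set"
  Dom :: "'m \<Rightarrow> 'o"
  Cod :: "'m \<Rightarrow> 'o"
  Idt :: "'o \<Rightarrow> 'm"
  Cmp :: "'m \<Rightarrow> 'm \<Rightarrow> 'm"
  Add :: "'m \<Rightarrow> 'm \<Rightarrow> 'm"
  Neg :: "'m \<Rightarrow> 'm"
  Zer :: "'o \<Rightarrow> 'o \<Rightarrow> 'm"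

definition hom :: "('o,'m) acat \<Rightarrow> 'o \<Rightarrow> 'o \<Rightarrow> 'm set" where
  "hom C a b = {f. f \<in> Mor C \<and> Dom C f = a \<and> Cod C f = b}"

definition category :: "('o,'m) acat \<Rightarrow> bool" where
  "category C \<longleftrightarrow>
     (\<forall>f\<in>Mor C. Dom C f \<in> Obj C \<and> Cod C f \<in> Obj C) \<and>
     (\<forall>a\<in>Obj C. Idt C a \<in> hom C a a) \<and>
     (\<forall>f\<in>Mor C. \<forall>g\<in>Mor C. Cod C f = Dom C g \<longrightarrow> Cmp C g f \<in> hom C (Dom C f) (Cod C g)) \<and>
     (\<forall>f\<in>Mor C. Cmp C f (Idt C (Dom C f)) = f \<and> Cmp C (Idt C (Cod C f)) f = f) \<and>
     (\<forall>f\<in>Mor C. \<forall>g\<in>Mor C. \<forall>h\<in>Mor C. Cod C f = Dom C g \<and> Cod C g = Dom C h \<longrightarrow>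
        Cmp C h (Cmp C g f) = Cmp C (Cmp C h g) f)"

definition preadditive :: "('o,'m) acat \<Rightarrow> bool" where
  "preadditive C \<longleftrightarrow> category C \<and>
     (\<forall>a\<in>Obj C. \<forall>b\<in>Obj C. Zer C a b \<in> hom C a b \<and>
        (\<forall>f\<in>hom C a b. Neg C f \<in> hom C a b \<and> Add C f (Zer C a b) = f \<and>
            Add C f (Neg C f) = Zer C a b \<and>
          (\<forall>g\<in>hom C a b. Add C f g \<in> hom C a b \<and> Add C f g = Add C g f \<and>
            (\<forall>h\<in>hom C a b. Add C (Add C f g) h = Add C f (Add C g h))))) \<and>
     (\<forall>a\<in>Obj C. \<forall>b\<in>Obj C. \<forall>c\<in>Obj C.
        (\<forall>f\<in>hom C a b. \<forall>g\<in>hom C a b. \<forall>h\<in>hom C b c.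
            Cmp C h (Add C f g) = Add C (Cmp C h f) (Cmp C h g)) \<and>
        (\<forall>f\<in>hom C a b. \<forall>g\<in>hom C b c. \<forall>h\<in>hom C b c.
            Cmp C (Add C g h) f = Add C (Cmp C g f) (Cmp C h f)))"

definition zero_object :: "('o,'m) acat \<Rightarrow> 'o \<Rightarrow> bool" where
  "zero_object C z \<longleftrightarrow> z \<in> Obj C \<and>
     (\<forall>a\<in>Obj C. (\<exists>!f. f \<in> hom C a z) \<and> (\<exists>!f. f \<in> hom C z a))"

definition biproduct :: "('o,'m) acat \<Rightarrow> 'o \<Rightarrow> 'o \<Rightarrow> 'o \<Rightarrow> 'm \<Rightarrow> 'm \<Rightarrow> 'm \<Rightarrow> 'm \<Rightarrow> bool" where
  "biproduct C a b p i1 i2 p1 p2 \<longleftrightarrow> p \<in> Obj C \<and>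
     i1 \<in> hom C a p \<and> i2 \<in> hom C b p \<and> p1 \<in> hom C p a \<and> p2 \<in> hom C p b \<and>
     Cmp C p1 i1 = Idt C a \<and> Cmp C p2 i2 = Idt C b \<and>
     Cmp C p1 i2 = Zer C b a \<and> Cmp C p2 i1 = Zer C a b \<and>
     Add C (Cmp C i1 p1) (Cmp C i2 p2) = Idt C p"

definition mono :: "('o,'m) acat \<Rightarrow> 'm \<Rightarrow> bool" where
  "mono C m \<longleftrightarrow> m \<in> Mor C \<and>
     (\<forall>g\<in>Mor C. \<forall>h\<in>Mor C. Cod C g = Dom C m \<and> Cod C h = Dom C m \<and> Dom C g = Dom C h \<and>
        Cmp C m g = Cmp C m h \<longrightarrow> g = h)"

definition epi :: "('o,'m) acat \<Rightarrow> 'm \<Rightarrow> bool" where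
  "epi C e \<longleftrightarrow> e \<in> Mor C \<and>
     (\<forall>g\<in>Mor C. \<forall>h\<in>Mor C. Dom C g = Cod C e \<and> Dom C h = Cod C e \<and> Cod C g = Cod C h \<and>
        Cmp C g e = Cmp C h e \<longrightarrow> g = h)"

definition is_kernel :: "('o,'m) acat \<Rightarrow> 'm \<Rightarrow> 'm \<Rightarrow> bool" where
  "is_kernel C f k \<longleftrightarrow> f \<in> Mor C \<and> k \<in> Mor C \<and> Cod C k = Dom C f \<and>
     Cmp C f k = Zer C (Dom C k) (Cod C f) \<and>
     (\<forall>h\<in>Mor C. Cod C h = Dom C f \<and> Cmp C f h = Zer C (Dom C h) (Cod C f) \<longrightarrow>
        (\<exists>!u. u \<in> hom C (Dom C h) (Dom C k) \<and> Cmp C k u = h))"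

definition is_cokernel :: "('o,'m) acat \<Rightarrow> 'm \<Rightarrow> 'm \<Rightarrow> bool" where
  "is_cokernel C f q \<longleftrightarrow> f \<in> Mor C \<and> q \<in> Mor C \<and> Dom C q = Cod C f \<and>
     Cmp C q f = Zer C (Dom C f) (Cod C q) \<and>
     (\<forall>h\<in>Mor C. Dom C h = Cod C f \<and> Cmp C h f = Zer C (Dom C f) (Cod C h) \<longrightarrow>
        (\<exists>!u. u \<in> hom C (Cod C q) (Cod C h) \<and> Cmp C u q = h))"

definition abelian :: "('o,'m) acat \<Rightarrow> bool" where
  "abelian C \<longleftrightarrow> preadditive C \<and> (\<exists>z. zero_object C z) \<and>
     (\<forall>a\<in>Obj C. \<forall>b\<in>Obj C. \<exists>p i1 i2 p1 p2. biproduct C a b p i1 i2 p1 p2) \<and>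
     (\<forall>f\<in>Mor C. \<exists>k. is_kernel C f k) \<and>
     (\<forall>f\<in>Mor C. \<exists>q. is_cokernel C f q) \<and>
     (\<forall>m. mono C m \<longrightarrow> (\<exists>f. is_kernel C f m)) \<and>
     (\<forall>e. epi C e \<longrightarrow> (\<exists>f. is_cokernel C f e))"

definition "section" :: "('o,'m) acat \<Rightarrow> 'm \<Rightarrow> bool" where
  "section C s \<longleftrightarrow> s \<in> Mor C \<and> (\<exists>t\<in>hom C (Cod C s) (Dom C s). Cmp C t s = Idt C (Dom C s))"

definition retraction :: "('o,'m) acat \<Rightarrow> 'm \<Rightarrow> bool" where
  "retraction C s \<longleftrightarrow> s \<in> Mor C \<and> (\<exists>t\<in>hom C (Cod C s) (Dom C s). Cmp C s t = Idt C (Cod C s))"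

definition fully_invariant :: "('o,'m) acat \<Rightarrow> 'm \<Rightarrow> bool" where
  "fully_invariant C i \<longleftrightarrow> mono C i \<and>
     (\<forall>h\<in>hom C (Cod C i) (Cod C i). \<exists>\<alpha>\<in>hom C (Dom C i) (Dom C i). Cmp C h i = Cmp C i \<alpha>)"

definition fully_coinvariant :: "('o,'m) acat \<Rightarrow> 'm \<Rightarrow> bool" where
  "fully_coinvariant C d \<longleftrightarrow> epi C d \<and>
     (\<forall>h\<in>hom C (Dom C d) (Dom C d). \<exists>\<beta>\<in>hom C (Cod C d) (Cod C d). Cmp C d h = Cmp C \<beta> d)"

definition short_exact :: "('o,'m) acat \<Rightarrow> 'm \<Rightarrow> 'm \<Rightarrow> bool" where
  "short_exact C i d \<longleftrightarrow> Cod C i = Dom C d \<and> mono C i \<and> epi C d \<and>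
     is_kernel C d i \<and> is_cokernel C i d"

definition fully_invariant_ses :: "('o,'m) acat \<Rightarrow> 'm \<Rightarrow> 'm \<Rightarrow> bool" where
  "fully_invariant_ses C i d \<longleftrightarrow> short_exact C i d \<and> fully_invariant C i"

text \<open>N = Cod i is M-F-split etc.\<close>
definition M_F_split :: "('o,'m) acat \<Rightarrow> 'o \<Rightarrow> 'm \<Rightarrow> 'm \<Rightarrow> bool" where
  "M_F_split C M i d \<longleftrightarrow> fully_invariant_ses C i d \<and> M \<in> Obj C \<and>
     (\<forall>g\<in>hom C M (Cod C i). \<forall>k. is_kernel C (Cmp C d g) k \<longrightarrow> section C k)"

definition strongly_M_F_split :: "('o,'m) acat \<Rightarrow> 'o \<Rightarrow> 'm \<Rightarrow> 'm \<Rightarrow> bool" where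
  "strongly_M_F_split C M i d \<longleftrightarrow> fully_invariant_ses C i d \<and> M \<in> Obj C \<and>
     (\<forall>g\<in>hom C M (Cod C i). \<forall>k. is_kernel C (Cmp C d g) k \<longrightarrow>
        section C k \<and> fully_invariant C k)"

definition dual_M_F_split :: "('o,'m) acat \<Rightarrow> 'o \<Rightarrow> 'm \<Rightarrow> 'm \<Rightarrow> bool" where
  "dual_M_F_split C M i d \<longleftrightarrow> fully_invariant_ses C i d \<and> M \<in> Obj C \<and>
     (\<forall>g\<in>hom C (Cod C i) M. \<forall>p. is_cokernel C (Cmp C g i) p \<longrightarrow> retraction C p)"

definition dual_strongly_M_F_split :: "('o,'m) acat \<Rightarrow> 'o \<Rightarrow> 'm \<Rightarrow> 'm \<Rightarrow> bool" where
  "dual_strongly_M_F_split C M i d \<longleftrightarrow> fully_invariant_ses C i d \<and> M \<in> Obj C \<and>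
     (\<forall>g\<in>hom C (Cod C i) M. \<forall>p. is_cokernel C (Cmp C g i) p \<longrightarrow>
        retraction C p \<and> fully_coinvariant C p)"

definition "self_F_split C i d = M_F_split C (Cod C i) i d"
definition "strongly_self_F_split C i d = strongly_M_F_split C (Cod C i) i d"
definition "dual_self_F_split C i d = dual_M_F_split C (Cod C i) i d"
definition "dual_strongly_self_F_split C i d = dual_strongly_M_F_split C (Cod C i) i d"

text \<open>A direct summand of M, represented by its inclusion k (a section with codomain M).\<close>
definition direct_summand :: "('o,'m) acat \<Rightarrow> 'o \<Rightarrow> 'm \<Rightarrow> bool" where
  "direct_summand C M k \<longleftrightarrow> section C k \<and> Cod C k = M"

definition sub_le :: "('o,'m) acat \<Rightarrow> 'm \<Rightarrow> 'm \<Rightarrow> bool" where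
  "sub_le C a b \<longleftrightarrow> (\<exists>u\<in>hom C (Dom C a) (Dom C b). Cmp C b u = a)"

end

theory Submission
  imports Defs
begin

text \<open>For a direct summand \<open>k\<close> of \<open>M\<close> with retraction \<open>t\<close>, let \<open>n = 1 - k t\<close> be the
  complementary idempotent. If \<open>F \<le> k\<close>, then \<open>k\<close> is the kernel of \<open>d n\<close>, so strong self-\<open>F\<close>-splitness
  makes \<open>k\<close> fully invariant; conversely every kernel of \<open>d g\<close> with \<open>g\<close> an endomorphism contains
  the fully invariant \<open>F\<close>. Dually, if \<open>k \<le> F\<close> then \<open>k\<close> is the kernel of the cokernel \<open>p\<close> of
  \<open>k t i\<close>, and \<open>p\<close> is the cokernel of its kernel whenever \<open>p\<close> is the cokernel of \<open>g i\<close>.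
  Full invariance passes from a cokernel to its kernel and back.\<close>

locale preadditive_cat =
  fixes C :: "('o, 'm) acat"
  assumes preadditive: "preadditive C"
begin

lemma category: "category C"
  using preadditive unfolding preadditive_def by blast

lemma homD: "f \<in> hom C a b \<Longrightarrow> f \<in> Mor C \<and> Dom C f = a \<and> Cod C f = b"
  by (simp add: hom_def)

lemma homI: "f \<in> Mor C \<Longrightarrow> f \<in> hom C (Dom C f) (Cod C f)"
  by (simp add: hom_def)

lemma hom_objs: "f \<in> hom C a b \<Longrightarrow> a \<in> Obj C \<and> b \<in> Obj C"
  using category unfolding category_def hom_def by blast

lemma comp_hom: "f \<in> hom C a b \<Longrightarrow> g \<in> hom C b c \<Longrightarrow> Cmp C g f \<in> hom C a c"
  using category unfolding category_def hom_def by force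

lemma comp_assoc: "f \<in> hom C a b \<Longrightarrow> g \<in> hom C b c \<Longrightarrow> h \<in> hom C c e \<Longrightarrow>
    Cmp C h (Cmp C g f) = Cmp C (Cmp C h g) f"
  using category unfolding category_def hom_def by force

lemma id_hom: "a \<in> Obj C \<Longrightarrow> Idt C a \<in> hom C a a"
  using category unfolding category_def by blast

lemma id_left: "f \<in> hom C a b \<Longrightarrow> Cmp C (Idt C b) f = f"
  using category unfolding category_def hom_def by force

lemma id_right: "f \<in> hom C a b \<Longrightarrow> Cmp C f (Idt C a) = f"
  using category unfolding category_def hom_def by force

lemma zero_hom: "a \<in> Obj C \<Longrightarrow> b \<in> Obj C \<Longrightarrow> Zer C a b \<in> hom C a b"
  using preadditive unfolding preadditive_def by blast

lemma add_hom: "f \<in> hom C a b \<Longrightarrow> g \<in> hom C a b \<Longrightarrow> Add C f g \<in> hom C a b"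
  using preadditive hom_objs unfolding preadditive_def by blast

lemma neg_hom: "f \<in> hom C a b \<Longrightarrow> Neg C f \<in> hom C a b"
  using preadditive hom_objs unfolding preadditive_def by blast

lemma add_commute: "f \<in> hom C a b \<Longrightarrow> g \<in> hom C a b \<Longrightarrow> Add C f g = Add C g f"
  using preadditive hom_objs unfolding preadditive_def by blast

lemma add_assoc: "f \<in> hom C a b \<Longrightarrow> g \<in> hom C a b \<Longrightarrow> h \<in> hom C a b \<Longrightarrow>
    Add C (Add C f g) h = Add C f (Add C g h)"
  using preadditive hom_objs unfolding preadditive_def by blast

lemma add_zero_right: "f \<in> hom C a b \<Longrightarrow> Add C f (Zer C a b) = f"
  using preadditive hom_objs unfolding preadditive_def by blast

lemma add_zero_left: "f \<in> hom C a b \<Longrightarrow> Add C (Zer C a b) f = f"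
  using add_zero_right add_commute zero_hom hom_objs by metis

lemma add_neg: "f \<in> hom C a b \<Longrightarrow> Add C f (Neg C f) = Zer C a b"
  using preadditive hom_objs unfolding preadditive_def by blast

lemma comp_add_distrib_left: "f \<in> hom C a b \<Longrightarrow> g \<in> hom C a b \<Longrightarrow> h \<in> hom C b c \<Longrightarrow>
    Cmp C h (Add C f g) = Add C (Cmp C h f) (Cmp C h g)"
  using preadditive hom_objs unfolding preadditive_def by (metis (no_types, lifting))

lemma comp_add_distrib_right: "f \<in> hom C a b \<Longrightarrow> g \<in> hom C b c \<Longrightarrow> h \<in> hom C b c \<Longrightarrow>
    Cmp C (Add C g h) f = Add C (Cmp C g f) (Cmp C h f)"
  using preadditive hom_objs unfolding preadditive_def by (metis (no_types, lifting))

lemma add_eq_self_imp_zero: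
  assumes "x \<in> hom C a b" "y \<in> hom C a b" "Add C x y = y"
  shows "x = Zer C a b"
proof -
  have "x = Add C x (Add C y (Neg C y))" using assms add_neg add_zero_right by metis
  also have "\<dots> = Add C (Add C x y) (Neg C y)" using assms add_assoc neg_hom by metis
  also have "\<dots> = Zer C a b" using assms add_neg by simp
  finally show ?thesis .
qed

lemma comp_zero_right:
  assumes "h \<in> hom C b c" "a \<in> Obj C"
  shows "Cmp C h (Zer C a b) = Zer C a c"
proof -
  have z: "Zer C a b \<in> hom C a b" using assms hom_objs zero_hom by blast
  have "Add C (Cmp C h (Zer C a b)) (Cmp C h (Zer C a b)) = Cmp C h (Zer C a b)"
    using comp_add_distrib_left[OF z z assms(1)] add_zero_right[OF z] by simp
  then show ?thesis using add_eq_self_imp_zero comp_hom z assms by blast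
qed

lemma comp_zero_left:
  assumes "f \<in> hom C a b" "c \<in> Obj C"
  shows "Cmp C (Zer C b c) f = Zer C a c"
proof -
  have z: "Zer C b c \<in> hom C b c" using assms hom_objs zero_hom by blast
  have "Add C (Cmp C (Zer C b c) f) (Cmp C (Zer C b c) f) = Cmp C (Zer C b c) f"
    using comp_add_distrib_right[OF assms(1) z z] add_zero_right[OF z] by simp
  then show ?thesis using add_eq_self_imp_zero comp_hom z assms by blast
qed

lemma complement_exists:
  assumes "e \<in> hom C a a"
  shows "\<exists>n\<in>hom C a a. Add C n e = Idt C a"
proof -
  have I: "Idt C a \<in> hom C a a" using assms hom_objs id_hom by blast
  have N: "Neg C e \<in> hom C a a" using assms neg_hom by blast
  have "Add C (Add C (Idt C a) (Neg C e)) e = Add C (Idt C a) (Add C (Neg C e) e)"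
    using add_assoc I N assms by blast
  also have "\<dots> = Idt C a" using add_commute[OF N assms] add_neg[OF assms] add_zero_right[OF I] by simp
  finally show ?thesis using add_hom[OF I N] by blast
qed

lemma mono_cancel:
  "mono C k \<Longrightarrow> g \<in> hom C a (Dom C k) \<Longrightarrow> h \<in> hom C a (Dom C k) \<Longrightarrow> Cmp C k g = Cmp C k h \<Longrightarrow> g = h"
  unfolding mono_def hom_def by auto

lemma section_mono:
  assumes k: "k \<in> hom C K M" and t: "t \<in> hom C M K" "Cmp C t k = Idt C K"
  shows "mono C k"
  unfolding mono_def
proof (intro conjI ballI impI)
  show "k \<in> Mor C" using k homD by blast
  fix g h assume gh: "g \<in> Mor C" "h \<in> Mor C"
    "Cod C g = Dom C k \<and> Cod C h = Dom C k \<and> Dom C g = Dom C h \<and> Cmp C k g = Cmp C k h"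
  have g: "g \<in> hom C (Dom C g) K" and h: "h \<in> hom C (Dom C g) K"
    using gh k homD homI by metis+
  have "g = Cmp C (Cmp C t k) g" using t id_left g by simp
  also have "\<dots> = Cmp C t (Cmp C k h)" using comp_assoc[OF g k t(1)] gh by simp
  also have "\<dots> = h" using comp_assoc[OF h k t(1)] t id_left h by simp
  finally show "g = h" .
qed

lemma is_kernelD:
  assumes "is_kernel C f k" "f \<in> hom C M X"
  shows "k \<in> hom C (Dom C k) M" "Cmp C f k = Zer C (Dom C k) X"
  using assms unfolding is_kernel_def hom_def by auto

lemma is_cokernelD:
  assumes "is_cokernel C f p" "f \<in> hom C X M"
  shows "p \<in> hom C M (Cod C p)" "Cmp C p f = Zer C X (Cod C p)"
  using assms unfolding is_cokernel_def hom_def by auto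

lemma kernel_factor:
  assumes "is_kernel C f k" "f \<in> hom C M X" "h \<in> hom C A M" "Cmp C f h = Zer C A X"
  shows "\<exists>u\<in>hom C A (Dom C k). Cmp C k u = h"
proof -
  have "h \<in> Mor C" "Dom C h = A" "Cod C h = Dom C f" "Cod C f = X"
    using assms(2,3) by (auto simp: hom_def)
  then show ?thesis using assms(1,4) unfolding is_kernel_def by metis
qed

lemma cokernel_factor:
  assumes "is_cokernel C f p" "f \<in> hom C X M" "h \<in> hom C M B" "Cmp C h f = Zer C X B"
  shows "\<exists>u\<in>hom C (Cod C p) B. Cmp C u p = h"
proof -
  have "h \<in> Mor C" "Dom C h = Cod C f" "Cod C h = B" "Dom C f = X"
    using assms(2,3) by (auto simp: hom_def)
  then show ?thesis using assms(1,4) unfolding is_cokernel_def by metis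
qed

lemma kernel_mono:
  assumes "is_kernel C f k"
  shows "mono C k"
  unfolding mono_def
proof (intro conjI ballI impI)
  show "k \<in> Mor C" using assms unfolding is_kernel_def by blast
  have f: "f \<in> hom C (Dom C f) (Cod C f)" using assms homI unfolding is_kernel_def by blast
  note k = is_kernelD[OF assms f]
  fix g h assume gh: "g \<in> Mor C" "h \<in> Mor C"
    "Cod C g = Dom C k \<and> Cod C h = Dom C k \<and> Dom C g = Dom C h \<and> Cmp C k g = Cmp C k h"
  have g: "g \<in> hom C (Dom C g) (Dom C k)" and h: "h \<in> hom C (Dom C g) (Dom C k)"
    using gh homI by metis+
  have kg: "Cmp C k g \<in> hom C (Dom C g) (Dom C f)" using comp_hom g k(1) by blast
  have "Cmp C f (Cmp C k g) = Zer C (Dom C g) (Cod C f)"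
    using comp_assoc[OF g k(1) f] k(2) comp_zero_left g f hom_objs by metis
  then have "\<exists>!u. u \<in> hom C (Dom C (Cmp C k g)) (Dom C k) \<and> Cmp C k u = Cmp C k g"
    using assms kg homD unfolding is_kernel_def by metis
  then show "g = h" using g h gh kg homD by metis
qed

lemma cokernel_epi:
  assumes "is_cokernel C f p"
  shows "epi C p"
  unfolding epi_def
proof (intro conjI ballI impI)
  show "p \<in> Mor C" using assms unfolding is_cokernel_def by blast
  have f: "f \<in> hom C (Dom C f) (Cod C f)" using assms homI unfolding is_cokernel_def by blast
  note p = is_cokernelD[OF assms f]
  fix g h assume gh: "g \<in> Mor C" "h \<in> Mor C"
    "Dom C g = Cod C p \<and> Dom C h = Cod C p \<and> Cod C g = Cod C h \<and> Cmp C g p = Cmp C h p"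
  have g: "g \<in> hom C (Cod C p) (Cod C g)" and h: "h \<in> hom C (Cod C p) (Cod C g)"
    using gh homI by metis+
  have gp: "Cmp C g p \<in> hom C (Cod C f) (Cod C g)" using comp_hom p(1) g by blast
  have "Cmp C (Cmp C g p) f = Zer C (Dom C f) (Cod C g)"
    using comp_assoc[OF f p(1) g] p(2) comp_zero_right g f hom_objs by metis
  then have "\<exists>!u. u \<in> hom C (Cod C p) (Cod C (Cmp C g p)) \<and> Cmp C u p = Cmp C g p"
    using assms gp homD unfolding is_cokernel_def by metis
  then show "g = h" using g h gh gp homD by metis
qed

lemma is_kernelI:
  assumes "mono C k" "k \<in> hom C K M" "f \<in> hom C M X" "Cmp C f k = Zer C K X"
    and factor: "\<And>A h. h \<in> hom C A M \<Longrightarrow> Cmp C f h = Zer C A X \<Longrightarrow> \<exists>u\<in>hom C A K. Cmp C k u = h"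
  shows "is_kernel C f k"
  unfolding is_kernel_def
proof (intro conjI ballI impI)
  show "f \<in> Mor C" "k \<in> Mor C" "Cod C k = Dom C f" "Cmp C f k = Zer C (Dom C k) (Cod C f)"
    using assms(2-4) homD by metis+
  fix h assume h0: "h \<in> Mor C" "Cod C h = Dom C f \<and> Cmp C f h = Zer C (Dom C h) (Cod C f)"
  have h: "h \<in> hom C (Dom C h) M" using h0 assms(3) homD homI by metis
  then obtain u where "u \<in> hom C (Dom C h) K" "Cmp C k u = h"
    using factor h0 assms(3) homD by metis
  then show "\<exists>!u. u \<in> hom C (Dom C h) (Dom C k) \<and> Cmp C k u = h"
    using mono_cancel[OF assms(1)] assms(2) homD by metis
qed

lemma is_cokernelI:
  assumes "epi C p" "p \<in> hom C M P" "f \<in> hom C X M" "Cmp C p f = Zer C X P"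
    and factor: "\<And>B h. h \<in> hom C M B \<Longrightarrow> Cmp C h f = Zer C X B \<Longrightarrow> \<exists>u\<in>hom C P B. Cmp C u p = h"
  shows "is_cokernel C f p"
  unfolding is_cokernel_def
proof (intro conjI ballI impI)
  show "f \<in> Mor C" "p \<in> Mor C" "Dom C p = Cod C f" "Cmp C p f = Zer C (Dom C f) (Cod C p)"
    using assms(2-4) homD by metis+
  fix h assume h0: "h \<in> Mor C" "Dom C h = Cod C f \<and> Cmp C h f = Zer C (Dom C f) (Cod C h)"
  have h: "h \<in> hom C M (Cod C h)" using h0 assms(3) homD homI by metis
  then obtain u where u: "u \<in> hom C P (Cod C h)" "Cmp C u p = h"
    using factor h0 assms(3) homD by metis
  have "v = u" if "v \<in> hom C P (Cod C h)" "Cmp C v p = h" for v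
    using assms(1) that u assms(2) homD unfolding epi_def by metis
  then show "\<exists>!u. u \<in> hom C (Cod C p) (Cod C h) \<and> Cmp C u p = h"
    using u assms(2) homD by metis
qed

lemma kernel_of_complement:
  assumes k: "k \<in> hom C K M" and t: "t \<in> hom C M K" "Cmp C t k = Idt C K"
    and n: "n \<in> hom C M M" "Add C n (Cmp C k t) = Idt C M"
  shows "is_kernel C n k"
proof (rule is_kernelI[OF section_mono[OF k t] k n(1)])
  have e: "Cmp C k t \<in> hom C M M" using comp_hom t(1) k by blast
  have ek: "Cmp C (Cmp C k t) k = k" using comp_assoc[OF k t(1) k] t id_right k by simp
  have "Add C (Cmp C n k) (Cmp C (Cmp C k t) k) = Cmp C (Idt C M) k"
    using comp_add_distrib_right[OF k n(1) e] n(2) by simp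
  then show "Cmp C n k = Zer C K M"
    using add_eq_self_imp_zero comp_hom k n(1) e ek id_left by metis
  fix A h assume h: "h \<in> hom C A M" and nh: "Cmp C n h = Zer C A M"
  have "h = Cmp C (Add C n (Cmp C k t)) h" using n(2) id_left h by simp
  also have "\<dots> = Cmp C (Cmp C k t) h"
    using comp_add_distrib_right[OF h n(1) e] nh add_zero_left comp_hom h e by metis
  also have "\<dots> = Cmp C k (Cmp C t h)" using comp_assoc[OF h t(1) k] by simp
  finally show "\<exists>u\<in>hom C A K. Cmp C k u = h" using comp_hom h t(1) by metis
qed

lemma idempotent_of_complement:
  assumes "n \<in> hom C M M" "e \<in> hom C M M" "Add C n e = Idt C M" "Cmp C n e = Zer C M M"
  shows "Cmp C n n = n"
proof -
  have "n = Cmp C n (Add C n e)" using assms id_right by simp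
  also have "\<dots> = Cmp C n n" using comp_add_distrib_left[OF assms(1,2,1)] assms(4)
      add_zero_right comp_hom assms(1) by metis
  finally show ?thesis by simp
qed

text \<open>If \<open>k = ker n\<close> with \<open>n\<close> idempotent, then \<open>n\<close> vanishes on every morphism it maps into \<open>k\<close>,
  so enlarging \<open>ker n\<close> to \<open>ker (d n)\<close> adds nothing as long as \<open>ker d \<le> k\<close>.\<close>
lemma kernel_comp_idempotent:
  assumes nk: "is_kernel C n k" and n: "n \<in> hom C M M" "Cmp C n n = n"
    and di: "is_kernel C d i" and d: "d \<in> hom C M Q" and ik: "sub_le C i k"
  shows "is_kernel C (Cmp C d n) k"
proof -
  note k = is_kernelD[OF nk n(1)]
  have i: "i \<in> hom C (Dom C i) M" using is_kernelD(1)[OF di d] .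
  obtain u where u: "u \<in> hom C (Dom C i) (Dom C k)" "Cmp C k u = i"
    using ik unfolding sub_le_def by blast
  have objs: "M \<in> Obj C" "Q \<in> Obj C" "Dom C k \<in> Obj C" using hom_objs d k(1) by blast+
  show ?thesis
  proof (rule is_kernelI[OF kernel_mono[OF nk] k(1)])
    show dn: "Cmp C d n \<in> hom C M Q" using comp_hom n(1) d by blast
    show "Cmp C (Cmp C d n) k = Zer C (Dom C k) Q"
      using comp_assoc[OF k(1) n(1) d] k(2) comp_zero_right d objs by metis
    fix A h assume h: "h \<in> hom C A M" and dnh: "Cmp C (Cmp C d n) h = Zer C A Q"
    have nh: "Cmp C n h \<in> hom C A M" using comp_hom h n(1) by blast
    obtain w where w: "w \<in> hom C A (Dom C i)" "Cmp C i w = Cmp C n h"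
      using kernel_factor[OF di d nh] dnh comp_assoc[OF h n(1) d] by metis
    have uw: "Cmp C u w \<in> hom C A (Dom C k)" using comp_hom w(1) u(1) by blast
    have "Cmp C n h = Cmp C n (Cmp C n h)" using comp_assoc[OF h n(1) n(1)] n(2) by simp
    also have "\<dots> = Cmp C (Cmp C n k) (Cmp C u w)"
      using w u comp_assoc[OF w(1) u(1) k(1)] comp_assoc[OF uw k(1) n(1)] by simp
    also have "\<dots> = Zer C A M" using k(2) comp_zero_left uw objs by metis
    finally show "\<exists>u\<in>hom C A (Dom C k). Cmp C k u = h" using kernel_factor[OF nk n(1) h] by blast
  qed
qed

lemma section_of_kernel_retraction:
  assumes p: "p \<in> hom C M P" and s: "s \<in> hom C P M" "Cmp C p s = Idt C P"
    and kp: "is_kernel C p k"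
  shows "section C k"
proof -
  note k = is_kernelD[OF kp p]
  define K where "K = Dom C k"
  have objs: "K \<in> Obj C" "M \<in> Obj C" "P \<in> Obj C" using hom_objs k(1) p K_def by blast+
  have sp: "Cmp C s p \<in> hom C M M" using comp_hom s(1) p by blast
  obtain n where n: "n \<in> hom C M M" "Add C n (Cmp C s p) = Idt C M"
    using complement_exists[OF sp] by blast
  have psp: "Cmp C p (Cmp C s p) = p" using comp_assoc[OF p s(1) p] s(2) id_left p by simp
  have "Add C (Cmp C p n) (Cmp C p (Cmp C s p)) = Cmp C p (Idt C M)"
    using comp_add_distrib_left[OF n(1) sp p] n(2) by simp
  then have "Cmp C p n = Zer C M P"
    using add_eq_self_imp_zero comp_hom n(1) sp p psp id_right by metis
  then obtain t where t: "t \<in> hom C M K" "Cmp C k t = n"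
    using kernel_factor[OF kp p n(1)] K_def by blast
  have "Cmp C (Cmp C s p) k = Zer C K M"
    using comp_assoc[OF k(1) p s(1)] k(2) comp_zero_right s(1) objs K_def by metis
  then have "Cmp C n k = k"
    using comp_add_distrib_right[OF k(1) n(1) sp] n(2) id_left k(1) add_zero_right comp_hom n(1)
    by (metis K_def)
  then have "Cmp C k (Cmp C t k) = Cmp C k (Idt C K)"
    using comp_assoc[OF k(1) t(1) k(1)[folded K_def]] t(2) id_right k(1) K_def by simp
  then have "Cmp C t k = Idt C K"
    using mono_cancel[OF kernel_mono[OF kp]] comp_hom k(1) t(1) id_hom objs K_def by metis
  then show ?thesis unfolding section_def using t(1) k(1) homD K_def by metis
qed

lemma fully_invariant_comp_endo_zero:
  assumes "fully_invariant C i" "i \<in> hom C F M" "d \<in> hom C M Q" "Cmp C d i = Zer C F Q"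
    and g: "g \<in> hom C M M"
  shows "Cmp C d (Cmp C g i) = Zer C F Q"
proof -
  obtain a where a: "a \<in> hom C F F" "Cmp C g i = Cmp C i a"
    using assms(1,2) g homD unfolding fully_invariant_def by metis
  then show ?thesis
    using comp_assoc[OF a(1) assms(2,3)] assms(4) comp_zero_left hom_objs assms(3) by metis
qed

lemma fully_invariant_kernel:
  assumes kp: "is_kernel C p k" and fc: "fully_coinvariant C p"
  shows "fully_invariant C k"
  unfolding fully_invariant_def
proof (intro conjI ballI)
  show "mono C k" using kernel_mono[OF kp] .
  have p: "p \<in> hom C (Dom C p) (Cod C p)" using kp homI unfolding is_kernel_def by blast
  note k = is_kernelD[OF kp p]
  fix h assume "h \<in> hom C (Cod C k) (Cod C k)"
  then have h: "h \<in> hom C (Dom C p) (Dom C p)" using k(1) homD by metis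
  obtain b where b: "b \<in> hom C (Cod C p) (Cod C p)" "Cmp C p h = Cmp C b p"
    using fc h unfolding fully_coinvariant_def by blast
  have hk: "Cmp C h k \<in> hom C (Dom C k) (Dom C p)" using comp_hom k(1) h by blast
  have "Cmp C p (Cmp C h k) = Cmp C b (Cmp C p k)"
    using comp_assoc[OF k(1) h p] comp_assoc[OF k(1) p b(1)] b(2) by simp
  also have "\<dots> = Zer C (Dom C k) (Cod C p)" using k(2) comp_zero_right b(1) hom_objs k(1) by metis
  finally show "\<exists>\<alpha>\<in>hom C (Dom C k) (Dom C k). Cmp C h k = Cmp C k \<alpha>"
    using kernel_factor[OF kp p hk] by metis
qed

lemma fully_coinvariant_cokernel:
  assumes kp: "is_cokernel C k p" and fi: "fully_invariant C k"
  shows "fully_coinvariant C p"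
  unfolding fully_coinvariant_def
proof (intro conjI ballI)
  show "epi C p" using cokernel_epi[OF kp] .
  have k: "k \<in> hom C (Dom C k) (Cod C k)" using kp homI unfolding is_cokernel_def by blast
  note p = is_cokernelD[OF kp k]
  fix h assume "h \<in> hom C (Dom C p) (Dom C p)"
  then have h: "h \<in> hom C (Cod C k) (Cod C k)" using p(1) homD by metis
  obtain a where a: "a \<in> hom C (Dom C k) (Dom C k)" "Cmp C h k = Cmp C k a"
    using fi h unfolding fully_invariant_def by blast
  have ph: "Cmp C p h \<in> hom C (Cod C k) (Cod C p)" using comp_hom h p(1) by blast
  have "Cmp C (Cmp C p h) k = Cmp C (Cmp C p k) a"
    using comp_assoc[OF k h p(1)] comp_assoc[OF a(1) k p(1)] a(2) by simp
  also have "\<dots> = Zer C (Dom C k) (Cod C p)" using p(2) comp_zero_left a(1) hom_objs p(1) by metis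
  finally show "\<exists>\<beta>\<in>hom C (Cod C p) (Cod C p). Cmp C p h = Cmp C \<beta> p"
    using cokernel_factor[OF kp k ph] by metis
qed

lemma is_kernel_of_factor:
  assumes fk: "is_kernel C f k" and f: "f \<in> hom C M X" and p: "p \<in> hom C M P"
    and b: "b \<in> hom C P X" "Cmp C b p = f" and pk: "Cmp C p k = Zer C (Dom C k) P"
  shows "is_kernel C p k"
proof (rule is_kernelI[OF kernel_mono[OF fk] is_kernelD(1)[OF fk f] p pk])
  fix A h assume h: "h \<in> hom C A M" "Cmp C p h = Zer C A P"
  then have "Cmp C f h = Zer C A X"
    using comp_assoc[OF h(1) p b(1)] b(2) comp_zero_right b(1) hom_objs by metis
  then show "\<exists>u\<in>hom C A (Dom C k). Cmp C k u = h" using kernel_factor[OF fk f h(1)] by blast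
qed

lemma is_cokernel_of_factor:
  assumes fp: "is_cokernel C f p" and f: "f \<in> hom C X M" and k: "k \<in> hom C K M"
    and w: "w \<in> hom C X K" "Cmp C k w = f" and pk: "Cmp C p k = Zer C K (Cod C p)"
  shows "is_cokernel C k p"
proof (rule is_cokernelI[OF cokernel_epi[OF fp] is_cokernelD(1)[OF fp f] k pk])
  fix B h assume h: "h \<in> hom C M B" "Cmp C h k = Zer C K B"
  then have "Cmp C h f = Zer C X B"
    using comp_assoc[OF w(1) k h(1)] w(2) comp_zero_left w(1) hom_objs by metis
  then show "\<exists>u\<in>hom C (Cod C p) B. Cmp C u p = h" using cokernel_factor[OF fp f h(1)] by blast
qed

lemma fully_invariant_sesD:
  assumes "fully_invariant_ses C i d"
  shows "i \<in> hom C (Dom C i) (Cod C i)" "d \<in> hom C (Cod C i) (Cod C d)"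
    "Cmp C d i = Zer C (Dom C i) (Cod C d)" "is_kernel C d i" "fully_invariant C i"
proof -
  have se: "short_exact C i d" and fi: "fully_invariant C i"
    using assms unfolding fully_invariant_ses_def by blast+
  then have k: "is_kernel C d i" and ci: "Cod C i = Dom C d" unfolding short_exact_def by blast+
  show "fully_invariant C i" "is_kernel C d i" by fact+
  have "d \<in> Mor C" using k unfolding is_kernel_def by blast
  then show d: "d \<in> hom C (Cod C i) (Cod C d)" using homI ci by simp
  show "i \<in> hom C (Dom C i) (Cod C i)" "Cmp C d i = Zer C (Dom C i) (Cod C d)"
    using is_kernelD[OF k d] ci by simp_all
qed

lemma strongly_self_F_split_summand_fully_invariant:
  assumes st: "strongly_self_F_split C i d"
    and ds: "direct_summand C (Cod C i) k" and ik: "sub_le C i k"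
  shows "fully_invariant C k"
proof -
  define M where "M = Cod C i"
  have ses: "fully_invariant_ses C i d"
    using st unfolding strongly_self_F_split_def strongly_M_F_split_def by blast
  note sesD = fully_invariant_sesD[OF ses, folded M_def]
  obtain t where t: "t \<in> hom C M (Dom C k)" "Cmp C t k = Idt C (Dom C k)"
    using ds unfolding direct_summand_def section_def M_def by metis
  have k: "k \<in> hom C (Dom C k) M" using ds homI unfolding direct_summand_def section_def M_def by metis
  have e: "Cmp C k t \<in> hom C M M" using comp_hom t(1) k by blast
  obtain n where n: "n \<in> hom C M M" "Add C n (Cmp C k t) = Idt C M"
    using complement_exists[OF e] by blast
  have nk: "is_kernel C n k" using kernel_of_complement[OF k t n] .
  have "Cmp C n (Cmp C k t) = Zer C M M"
    using comp_assoc[OF t(1) k n(1)] is_kernelD(2)[OF nk n(1)] comp_zero_left t(1) hom_objs by metis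
  then have "Cmp C n n = n" using idempotent_of_complement[OF n(1) e n(2)] by blast
  then have "is_kernel C (Cmp C d n) k"
    using kernel_comp_idempotent[OF nk n(1) _ sesD(4,2) ik] by blast
  then show ?thesis using st n(1) unfolding strongly_self_F_split_def strongly_M_F_split_def M_def by blast
qed

lemma strongly_self_F_split_if_summands_fully_invariant:
  assumes sp: "self_F_split C i d"
    and H: "\<forall>k. direct_summand C (Cod C i) k \<and> sub_le C i k \<longrightarrow> fully_invariant C k"
  shows "strongly_self_F_split C i d"
  unfolding strongly_self_F_split_def strongly_M_F_split_def
proof (intro conjI ballI allI impI)
  show ses: "fully_invariant_ses C i d" "Cod C i \<in> Obj C"
    using sp unfolding self_F_split_def M_F_split_def by blast+
  note sesD = fully_invariant_sesD[OF ses(1)]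
  fix g k assume g: "g \<in> hom C (Cod C i) (Cod C i)" and kk: "is_kernel C (Cmp C d g) k"
  show sk: "section C k" using sp g kk unfolding self_F_split_def M_F_split_def by blast
  have dg: "Cmp C d g \<in> hom C (Cod C i) (Cod C d)" using comp_hom g sesD(2) by blast
  have "Cmp C (Cmp C d g) i = Zer C (Dom C i) (Cod C d)"
    using fully_invariant_comp_endo_zero[OF sesD(5,1,2,3) g] comp_assoc[OF sesD(1) g sesD(2)] by simp
  then have "sub_le C i k" using kernel_factor[OF kk dg sesD(1)] unfolding sub_le_def by blast
  moreover have "Cod C k = Cod C i" using is_kernelD(1)[OF kk dg] homD by blast
  ultimately show "fully_invariant C k" using H sk unfolding direct_summand_def by blast
qed

end

locale abelian_cat =
  fixes C :: "('o, 'm) acat"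
  assumes abelian: "abelian C"

sublocale abelian_cat \<subseteq> preadditive_cat
  using abelian unfolding abelian_def by unfold_locales blast

context abelian_cat
begin

lemma kernel_exists: "f \<in> hom C a b \<Longrightarrow> \<exists>k. is_kernel C f k"
  using abelian homD unfolding abelian_def by blast

lemma cokernel_exists: "f \<in> hom C a b \<Longrightarrow> \<exists>p. is_cokernel C f p"
  using abelian homD unfolding abelian_def by blast

lemma mono_is_kernel: "mono C k \<Longrightarrow> \<exists>f. is_kernel C f k"
  using abelian unfolding abelian_def by blast

lemma dual_strongly_self_F_split_summand_fully_invariant:
  assumes st: "dual_strongly_self_F_split C i d"
    and ds: "direct_summand C (Cod C i) k" and ki: "sub_le C k i"
  shows "fully_invariant C k"
proof -
  define M where "M = Cod C i"
  define K where "K = Dom C k"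
  have ses: "fully_invariant_ses C i d"
    using st unfolding dual_strongly_self_F_split_def dual_strongly_M_F_split_def by blast
  note i = fully_invariant_sesD(1)[OF ses, folded M_def]
  obtain t where t: "t \<in> hom C M K" "Cmp C t k = Idt C K"
    using ds unfolding direct_summand_def section_def M_def K_def by metis
  have k: "k \<in> hom C K M" using ds homI unfolding direct_summand_def section_def M_def K_def by metis
  obtain u where u: "u \<in> hom C K (Dom C i)" "Cmp C i u = k"
    using ki unfolding sub_le_def K_def by blast
  have ti: "Cmp C t i \<in> hom C (Dom C i) K" using comp_hom i t(1) by blast
  have kti: "Cmp C k (Cmp C t i) \<in> hom C (Dom C i) M" using comp_hom ti k by blast
  have kt: "Cmp C k t \<in> hom C M M" using comp_hom t(1) k by blast
  obtain p where pc: "is_cokernel C (Cmp C (Cmp C k t) i) p" using cokernel_exists comp_hom i kt by blast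
  then have pc': "is_cokernel C (Cmp C k (Cmp C t i)) p" using comp_assoc[OF i t(1) k] by simp
  note p = is_cokernelD[OF pc' kti]
  have fc: "fully_coinvariant C p"
    using st kt pc unfolding dual_strongly_self_F_split_def dual_strongly_M_F_split_def M_def by blast
  obtain f where fk: "is_kernel C f k" using mono_is_kernel section_mono[OF k t] by blast
  have f: "f \<in> hom C M (Cod C f)" using fk k homD homI unfolding is_kernel_def by metis
  note f0 = is_kernelD(2)[OF fk f]
  have "Cmp C f (Cmp C k (Cmp C t i)) = Zer C (Dom C i) (Cod C f)"
    using comp_assoc[OF ti k f] f0 comp_zero_left ti hom_objs f K_def by metis
  then obtain b where b: "b \<in> hom C (Cod C p) (Cod C f)" "Cmp C b p = f"
    using cokernel_factor[OF pc' kti f] by blast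
  have "Cmp C (Cmp C t i) u = Idt C K" using comp_assoc[OF u(1) i t(1)] u(2) t(2) by simp
  then have "Cmp C (Cmp C k (Cmp C t i)) u = k"
    using comp_assoc[OF u(1) ti k] id_right k by simp
  then have "Cmp C p k = Zer C K (Cod C p)"
    using comp_assoc[OF u(1) kti p(1)] p(2) comp_zero_left u(1) hom_objs p(1) by metis
  then have "is_kernel C p k" using is_kernel_of_factor[OF fk f p(1) b] K_def by blast
  then show ?thesis using fully_invariant_kernel fc by blast
qed

lemma dual_strongly_self_F_split_if_summands_fully_invariant:
  assumes sp: "dual_self_F_split C i d"
    and H: "\<forall>k. direct_summand C (Cod C i) k \<and> sub_le C k i \<longrightarrow> fully_invariant C k"
  shows "dual_strongly_self_F_split C i d"
  unfolding dual_strongly_self_F_split_def dual_strongly_M_F_split_def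
proof (intro conjI ballI allI impI)
  show ses: "fully_invariant_ses C i d" "Cod C i \<in> Obj C"
    using sp unfolding dual_self_F_split_def dual_M_F_split_def by blast+
  note sesD = fully_invariant_sesD[OF ses(1)]
  fix g p assume g: "g \<in> hom C (Cod C i) (Cod C i)" and pc: "is_cokernel C (Cmp C g i) p"
  show rp: "retraction C p" using sp g pc unfolding dual_self_F_split_def dual_M_F_split_def by blast
  have gi: "Cmp C g i \<in> hom C (Dom C i) (Cod C i)" using comp_hom sesD(1) g by blast
  note p = is_cokernelD[OF pc gi]
  obtain s where s: "s \<in> hom C (Cod C p) (Cod C i)" "Cmp C p s = Idt C (Cod C p)"
    using rp p(1) homD unfolding retraction_def by metis
  obtain k where kk: "is_kernel C p k" using kernel_exists p(1) by blast
  note k = is_kernelD[OF kk p(1)]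
  have sk: "section C k" using section_of_kernel_retraction[OF p(1) s kk] .
  obtain b where b: "b \<in> hom C (Cod C p) (Cod C d)" "Cmp C b p = d"
    using cokernel_factor[OF pc gi sesD(2)] fully_invariant_comp_endo_zero[OF sesD(5,1,2,3) g] by blast
  have "Cmp C d k = Zer C (Dom C k) (Cod C d)"
    using comp_assoc[OF k(1) p(1) b(1)] b(2) k(2) comp_zero_right b(1) hom_objs k(1) by metis
  then have "sub_le C k i" using kernel_factor[OF sesD(4,2) k(1)] unfolding sub_le_def by blast
  then have "fully_invariant C k" using H sk k(1) homD unfolding direct_summand_def by blast
  moreover obtain w where "w \<in> hom C (Dom C i) (Dom C k)" "Cmp C k w = Cmp C g i"
    using kernel_factor[OF kk p(1) gi] p(2) by blast
  then have "is_cokernel C k p" using is_cokernel_of_factor[OF pc gi k(1)] k(2) by blast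
  ultimately show "fully_coinvariant C p" using fully_coinvariant_cokernel by blast
qed

end

theorem theorem3p5:
  fixes C :: "('o, 'm) acat" and i d :: 'm
  assumes "abelian C"
    and "fully_invariant_ses C i d"
  shows "(strongly_self_F_split C i d \<longleftrightarrow>
            self_F_split C i d \<and>
            (\<forall>k. direct_summand C (Cod C i) k \<and> sub_le C i k \<longrightarrow> fully_invariant C k))
       \<and> (dual_strongly_self_F_split C i d \<longleftrightarrow>
            dual_self_F_split C i d \<and>
            (\<forall>k. direct_summand C (Cod C i) k \<and> sub_le C k i \<longrightarrow> fully_invariant C k))"
proof -
  interpret abelian_cat C using assms(1) by unfold_locales
  have "strongly_self_F_split C i d \<Longrightarrow> self_F_split C i d"
    unfolding strongly_self_F_split_def strongly_M_F_split_def self_F_split_def M_F_split_def by blast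
  moreover have "dual_strongly_self_F_split C i d \<Longrightarrow> dual_self_F_split C i d"
    unfolding dual_strongly_self_F_split_def dual_strongly_M_F_split_def
      dual_self_F_split_def dual_M_F_split_def by blast
  ultimately show ?thesis
    using strongly_self_F_split_summand_fully_invariant
      strongly_self_F_split_if_summands_fully_invariant
      dual_strongly_self_F_split_summand_fully_invariant
      dual_strongly_self_F_split_if_summands_fully_invariant by blast
qed

end
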